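(* Let $F$ be a differential field with derivation $\partial$ whose field of constants is an algebraically closed field $C$ of characteristic zero, and let $l\ge1$. Let $A=A_\Delta+H+N\in\mathfrak{sl}_{l+1}(F)$ with $A_\Delta=\sum_{i=1}^{l}E_{i,i+1}$, $H$ diagonal of trace zero over $F$, and $N$ strictly lower triangular over $F$. Then there exists $U\in\mathcal{U}^-(F)$ such that $UAU^{-1}+\partial(U)U^{-1}=A_\Delta+N'$ for some strictly lower triangular matrix $N'$ over $F$.
   Context: $E_{ij}$ denotes the matrix unit with $1$ at $(i,j)$. $\mathcal{U}^-(F)$ denotes the group of lower triangular unipotent $(l+1)\times(l+1)$ matrices over $F$ (the unipotent radical of the lower triangular Borel subgroup of $\mathrm{SL}_{l+1}$). In root-theoretic terms: $A\in A_\Delta+\mathbf{H}(F)\oplus\bigoplus_{\delta\in\Phi^-}\mathrm{Lie}(\mathrm{SL}_{l+1})_\delta(F)$ is transformed into $A_\Delta+\bigoplus_{\delta\in\Phi^-}\mathrm{Lie}(\mathrm{SL}_{l+1})_\delta(F)$, where $\mathbf{H}$ is the diagonal Cartan subalgebra and $\Phi^-$ the negative roots of type $A_l$ with root spaces spanned by $E_{t+1,s}$, $s\le t$. *)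

theory Defs
  imports "Jordan_Normal_Form.Matrix" "HOL-Computational_Algebra.Polynomial"
begin

definition is_derivation :: "('a::field \<Rightarrow> 'a) \<Rightarrow> bool" where
  "is_derivation D \<longleftrightarrow> (\<forall>a b. D (a + b) = D a + D b \<and> D (a * b) = a * D b + D a * b)"

definition dconsts :: "('a::field \<Rightarrow> 'a) \<Rightarrow> 'a set" where
  "dconsts D = {c. D c = 0}"

definition alg_closed_subset :: "'a::field set \<Rightarrow> bool" where
  "alg_closed_subset C \<longleftrightarrow>
     (\<forall>p::'a poly. (\<forall>i. coeff p i \<in> C) \<and> degree p > 0 \<longrightarrow> (\<exists>x\<in>C. poly p x = 0))"

text \<open>A_Delta = sum of E_{i,i+1} (0-based indices: entries (i,i+1)).\<close>
definition A_Delta :: "nat \<Rightarrow> 'a::{zero,one} mat" where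
  "A_Delta n = mat n n (\<lambda>(i,j). if j = i + 1 then 1 else 0)"

definition strictly_lower :: "nat \<Rightarrow> 'a::zero mat \<Rightarrow> bool" where
  "strictly_lower n N \<longleftrightarrow> N \<in> carrier_mat n n \<and> (\<forall>i<n. \<forall>j<n. i \<le> j \<longrightarrow> N $$ (i,j) = 0)"

definition lower_unipotent :: "nat \<Rightarrow> 'a::{zero,one} mat \<Rightarrow> bool" where
  "lower_unipotent n U \<longleftrightarrow> U \<in> carrier_mat n n \<and>
     (\<forall>i<n. U $$ (i,i) = 1) \<and> (\<forall>i<n. \<forall>j<n. i < j \<longrightarrow> U $$ (i,j) = 0)"

definition mat_trace :: "nat \<Rightarrow> 'a::comm_monoid_add mat \<Rightarrow> 'a" where
  "mat_trace n A = (\<Sum>i<n. A $$ (i,i))"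

end

theory Submission
  imports Defs "Jordan_Normal_Form.Determinant"
begin

text \<open>Conjugate by the bidiagonal unipotent matrix U whose entry at (i, i-1) is the partial
  sum s_i = h_0 + ... + h_(i-1) of the diagonal of H. On and above the diagonal,
  U A + \<partial>U - A_\<Delta> U then has only the diagonal entries h_i + s_i - s_(i+1) = 0 (the last one
  vanishing because tr H = 0), so it is strictly lower triangular; multiplying it by the lower
  triangular U\<inverse> keeps it so, and U A U\<inverse> + \<partial>U U\<inverse> = A_\<Delta> + (U A + \<partial>U - A_\<Delta> U) U\<inverse>.\<close>

definition lower_triangular :: "nat \<Rightarrow> 'a::zero mat \<Rightarrow> bool" where
  "lower_triangular n M \<longleftrightarrow> M \<in> carrier_mat n n \<and> (\<forall>i<n. \<forall>j<n. i < j \<longrightarrow> M $$ (i,j) = 0)"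

lemma strictly_lower_mult_lower_triangular:
  fixes B V :: "'a::semiring_0 mat"
  assumes B: "strictly_lower n B" and V: "lower_triangular n V"
  shows "strictly_lower n (B * V)"
  unfolding strictly_lower_def
proof (intro conjI allI impI)
  show "B * V \<in> carrier_mat n n"
    using B V by (auto simp: strictly_lower_def lower_triangular_def)
  fix i j assume ij: "i < n" "j < n" "i \<le> j"
  have "(B * V) $$ (i,j) = (\<Sum>k\<in>{0..<n}. B $$ (i,k) * V $$ (k,j))"
    using ij B V by (auto simp: strictly_lower_def lower_triangular_def scalar_prod_def)
  also have "\<dots> = 0"
  proof (rule sum.neutral, intro ballI)
    fix k assume "k \<in> {0..<n}"
    then show "B $$ (i,k) * V $$ (k,j) = 0"
      using B V ij by (cases "i \<le> k") (auto simp: strictly_lower_def lower_triangular_def)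
  qed
  finally show "(B * V) $$ (i,j) = 0" .
qed

lemma derivation_zero: "is_derivation D \<Longrightarrow> D 0 = 0"
  unfolding is_derivation_def by (metis add_cancel_right_right add_0)

lemma derivation_one: "is_derivation D \<Longrightarrow> D 1 = 0"
  unfolding is_derivation_def by (metis add_cancel_right_right mult_1 mult_1_right)

lemma strictly_lower_map_mat_derivation:
  assumes "is_derivation D" and "lower_unipotent n U"
  shows "strictly_lower n (map_mat D U)"
  using assms derivation_zero[OF assms(1)] derivation_one[OF assms(1)]
  by (auto simp: strictly_lower_def lower_unipotent_def le_less)

lemma gauge_transform_eq_shift:
  fixes U V A E C :: "'a::comm_ring_1 mat"
  assumes carrier: "U \<in> carrier_mat n n" "V \<in> carrier_mat n n" "A \<in> carrier_mat n n"
      "E \<in> carrier_mat n n" "C \<in> carrier_mat n n"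
    and inverse: "U * V = 1\<^sub>m n"
  shows "U * A * V + E * V = C + (U * A + E - C * U) * V"
proof -
  have R: "U * A + E - C * U \<in> carrier_mat n n"
    using carrier by (intro minus_carrier_mat mult_carrier_mat)
  have split: "U * A + E = (U * A + E - C * U) + C * U"
    using carrier by (intro eq_matI) auto
  have "U * A * V + E * V = (U * A + E) * V"
    using carrier by (simp add: add_mult_distrib_mat[of _ n n])
  also have "\<dots> = ((U * A + E - C * U) + C * U) * V"
    by (rule arg_cong[where f = "\<lambda>X. X * V", OF split])
  also have "\<dots> = (U * A + E - C * U) * V + C * (U * V)"
    using carrier by (simp add: add_mult_distrib_mat[OF R _ carrier(2)])
  also have "\<dots> = (U * A + E - C * U) * V + C"
    using carrier inverse by simp
  also have "\<dots> = C + (U * A + E - C * U) * V"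
    using R carrier by (intro comm_add_mat) auto
  finally show ?thesis .
qed

definition subdiag_unipotent :: "nat \<Rightarrow> (nat \<Rightarrow> 'a::comm_ring_1) \<Rightarrow> 'a mat" where
  "subdiag_unipotent n s = mat n n (\<lambda>(i,j). if i = j then 1 else if i = Suc j then s i else 0)"

definition subdiag_unipotent_inv :: "nat \<Rightarrow> (nat \<Rightarrow> 'a::comm_ring_1) \<Rightarrow> 'a mat" where
  "subdiag_unipotent_inv n s =
     mat n n (\<lambda>(i,j). if j \<le> i then (-1) ^ (i - j) * prod s {Suc j..i} else 0)"

lemma lower_unipotent_subdiag_unipotent: "lower_unipotent n (subdiag_unipotent n s)"
  by (auto simp: lower_unipotent_def subdiag_unipotent_def)

lemma lower_triangular_subdiag_unipotent_inv: "lower_triangular n (subdiag_unipotent_inv n s)"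
  by (auto simp: lower_triangular_def subdiag_unipotent_inv_def)

lemma index_subdiag_unipotent_mult:
  fixes M :: "'a::comm_ring_1 mat"
  assumes M: "M \<in> carrier_mat n m" and i: "i < n" and k: "k < m"
  shows "(subdiag_unipotent n s * M) $$ (i,k) =
           M $$ (i,k) + (if 0 < i then s i * M $$ (i - 1, k) else 0)"
proof -
  have "(subdiag_unipotent n s * M) $$ (i,k) =
          (\<Sum>j\<in>{0..<n}. (if j = i then M $$ (j,k) else 0)
                        + (if Suc j = i then s i * M $$ (j,k) else 0))"
    using M i k by (auto simp: subdiag_unipotent_def scalar_prod_def intro!: sum.cong)
  also have "\<dots> = M $$ (i,k) + (if 0 < i then s i * M $$ (i - 1, k) else 0)"
    using i by (cases i) (simp_all add: sum.distrib sum.delta)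
  finally show ?thesis .
qed

lemma index_A_Delta_mult:
  fixes M :: "'a::comm_ring_1 mat"
  assumes M: "M \<in> carrier_mat n m" and i: "i < n" and k: "k < m"
  shows "(A_Delta n * M) $$ (i,k) = (if Suc i < n then M $$ (Suc i, k) else 0)"
proof -
  have "(A_Delta n * M) $$ (i,k) = (\<Sum>j\<in>{0..<n}. (if j = Suc i then 1 else 0) * M $$ (j,k))"
    using M i k by (auto simp: A_Delta_def scalar_prod_def intro!: sum.cong)
  also have "\<dots> = (\<Sum>j\<in>{0..<n}. if j = Suc i then M $$ (j,k) else 0)"
    by (rule sum.cong) auto
  finally show ?thesis by (simp add: sum.delta)
qed

lemma subdiag_unipotent_mult_inv:
  "subdiag_unipotent n s * subdiag_unipotent_inv n s = 1\<^sub>m n"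
proof (rule eq_matI)
  let ?V = "subdiag_unipotent_inv n s"
  fix i j assume "i < dim_row (1\<^sub>m n)" "j < dim_col (1\<^sub>m n)"
  then have i: "i < n" and j: "j < n" by auto
  have "?V $$ (i,j) + (if 0 < i then s i * ?V $$ (i - 1, j) else 0) = 1\<^sub>m n $$ (i,j)"
  proof (cases "j < i")
    case True
    then obtain m where m: "i = Suc m" "j \<le> m" by (cases i) auto
    then have "prod s {Suc j..i} = prod s {Suc j..m} * s i" and "i - j = Suc (m - j)"
      by (simp_all add: prod.cl_ivl_Suc)
    then show ?thesis using m i j by (simp add: subdiag_unipotent_inv_def)
  qed (use i j in \<open>auto simp: subdiag_unipotent_inv_def\<close>)
  then show "(subdiag_unipotent n s * ?V) $$ (i,j) = 1\<^sub>m n $$ (i,j)"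
    using i j index_subdiag_unipotent_mult[of ?V n n i j s]
    by (simp add: subdiag_unipotent_inv_def)
qed (auto simp: subdiag_unipotent_def subdiag_unipotent_inv_def)

lemma normalising_residual_strictly_lower:
  fixes H N E :: "'a::comm_ring_1 mat"
  assumes H: "H \<in> carrier_mat n n" "diagonal_mat H" "mat_trace n H = 0"
    and N: "strictly_lower n N" and E: "strictly_lower n E"
  defines "U \<equiv> subdiag_unipotent n (\<lambda>i. \<Sum>k<i. H $$ (k,k))"
  shows "strictly_lower n (U * (A_Delta n + H + N) + E - A_Delta n * U)"
proof -
  define s where "s = (\<lambda>i. \<Sum>k<i. H $$ (k,k))"
  define A where "A = A_Delta n + H + N"
  have Us: "U = subdiag_unipotent n s"
    by (simp add: U_def s_def)
  have U: "U \<in> carrier_mat n n" and AD: "(A_Delta n :: 'a mat) \<in> carrier_mat n n"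
    by (auto simp: U_def subdiag_unipotent_def A_Delta_def)
  have A: "A \<in> carrier_mat n n" and Ec: "E \<in> carrier_mat n n"
    using H N E by (auto simp: A_def strictly_lower_def)
  have A_upper: "A $$ (i,k) = (if k = Suc i then 1 else 0) + (if i = k then H $$ (i,i) else 0)"
    if "i \<le> k" "k < n" for i k
    using that H N by (auto simp: A_def A_Delta_def diagonal_mat_def strictly_lower_def)
  have s_Suc: "s (Suc i) = s i + H $$ (i,i)" for i
    by (simp add: s_def)
  have s_0: "s 0 = 0" and s_last: "s n = 0"
    using H(3) by (simp_all add: s_def mat_trace_def)
  show ?thesis
    unfolding strictly_lower_def A_def[symmetric]
  proof (intro conjI allI impI)
    show "U * A + E - A_Delta n * U \<in> carrier_mat n n"
      by (intro minus_carrier_mat mult_carrier_mat[OF AD U])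
    fix i k assume ik: "i < n" "k < n" "i \<le> k"
    have s_top: "H $$ (i,i) + s i = 0" if "\<not> Suc i < n"
    proof -
      have "n = Suc i" using that ik(1) by simp
      then show ?thesis using s_last s_Suc[of i] by (simp add: add.commute)
    qed
    have "E $$ (i,k) = 0" using E ik by (simp add: strictly_lower_def)
    then have "(U * A + E - A_Delta n * U) $$ (i,k) =
                 (U * A) $$ (i,k) - (A_Delta n * U) $$ (i,k)"
      using ik carrier_matD[OF U] carrier_matD[OF A] carrier_matD[OF AD] carrier_matD[OF Ec]
      by (subst index_minus_mat(1)) simp_all
    also have "\<dots> = A $$ (i,k) + (if 0 < i then s i * A $$ (i - 1, k) else 0)
                     - (if Suc i < n then U $$ (Suc i, k) else 0)"
      using ik index_subdiag_unipotent_mult[OF A ik(1,2)] index_A_Delta_mult[OF U ik(1,2)]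
      by (simp add: Us)
    also have "\<dots> = 0"
      using ik A_upper[OF ik(3,2)] A_upper[of "i - 1" k] s_top
      by (cases "Suc i < n") (auto simp: Us subdiag_unipotent_def s_Suc s_0)
    finally show "(U * A + E - A_Delta n * U) $$ (i,k) = 0" .
  qed
qed

theorem lemma11:
  fixes D :: "'a::field_char_0 \<Rightarrow> 'a" and l :: nat
    and H N :: "'a mat"
  assumes "is_derivation D"
    and "alg_closed_subset (dconsts D)"
    and "l \<ge> 1"
    and "H \<in> carrier_mat (l+1) (l+1)" and "diagonal_mat H" and "mat_trace (l+1) H = 0"
    and "strictly_lower (l+1) N"
  shows "\<exists>U Uinv N'. lower_unipotent (l+1) U \<and> Uinv \<in> carrier_mat (l+1) (l+1) \<and>
           U * Uinv = 1\<^sub>m (l+1) \<and> Uinv * U = 1\<^sub>m (l+1) \<and>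
           strictly_lower (l+1) N' \<and>
           U * (A_Delta (l+1) + H + N) * Uinv + map_mat D U * Uinv = A_Delta (l+1) + N'"
proof -
  define n where "n = l + 1"
  define s where "s = (\<lambda>i. \<Sum>k<i. H $$ (k,k))"
  define U where "U = subdiag_unipotent n s"
  define V where "V = subdiag_unipotent_inv n s"
  define A where "A = A_Delta n + H + N"
  define N' where "N' = (U * A + map_mat D U - A_Delta n * U) * V"
  have U: "lower_unipotent n U" and V: "lower_triangular n V"
    by (simp_all add: U_def V_def lower_unipotent_subdiag_unipotent
        lower_triangular_subdiag_unipotent_inv)
  have UV: "U * V = 1\<^sub>m n" by (simp add: U_def V_def subdiag_unipotent_mult_inv)
  have VU: "V * U = 1\<^sub>m n"
    using U V UV mat_mult_left_right_inverse
    by (auto simp: lower_unipotent_def lower_triangular_def)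
  have DU: "strictly_lower n (map_mat D U)"
    using strictly_lower_map_mat_derivation[OF assms(1) U] .
  have "strictly_lower n (U * A + map_mat D U - A_Delta n * U)"
    using normalising_residual_strictly_lower[of H n N "map_mat D U"] assms(4-7) DU
    unfolding U_def s_def A_def n_def by simp
  then have "strictly_lower n N'"
    unfolding N'_def using V by (rule strictly_lower_mult_lower_triangular)
  moreover have "U * A * V + map_mat D U * V = A_Delta n + N'"
    unfolding N'_def using U V UV assms(4,7)
    by (intro gauge_transform_eq_shift)
      (auto simp: A_def A_Delta_def n_def lower_unipotent_def lower_triangular_def
        strictly_lower_def)
  ultimately show ?thesis
    using U V UV VU unfolding A_def n_def lower_triangular_def by blast
qed

end
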